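(* For every constant $c>0$ there is a constant $C$ such that for every $n\ge2$, every string $x$ of length $n$ and every $i\in\{1,\dots,n\}$, with probability at least $1-n^{-c}$ (over the random hash function), the number of increasing nodes on the path from the root of the DDT of $x$ to the $i$-th leaf is at most $C\log_2 n$.
   Context: Data Dependent Tree (DDT). Fix a string $x=x_1\cdots x_n$ and a hash function $h$, modeled as follows: $h$ assigns to every possible input (a character, or a finite tuple of integers) a value in a totally ordered set; equal inputs receive equal values, distinct inputs receive distinct values, and the relative order of the values of distinct inputs is uniformly random (as for a uniformly random injection), independent of $x$. The DDT of $x$ is a rooted tree built level by level. Level $0$ consists of $n$ leaves in left-to-right order, the $i$-th storing $x_i$, with hash $h(x_i)$. Levels $1,2,3,\dots$ alternate between duplicate levels (odd $\ell$) and increasing levels (even $\ell$). At a duplicate level $\ell$, the nodes of level $\ell-1$ (left to right) are partitioned into maximal runs of consecutive nodes with equal hash; each run $c_1,\dots,c_k$ becomes the ordered list of children of a new duplicate node at level $\ell$ with hash $h(\langle \ell,k,h(c_1)\rangle)$. At an increasing level $\ell$, the nodes of level $\ell-1$ are partitioned into maximal runs of consecutive nodes whose hashes are strictly increasing left to right; each run $c_1,\dots,c_k$ becomes the ordered children of a new increasing node at level $\ell$ with hash $h(\langle \ell,h(c_1),\dots,h(c_k)\rangle)$. Construction stops at the first level consisting of a single node (the root). The height is the number of levels above level $0$. The string induced by a node is the concatenation, left to right, of the characters at the leaves of its subtree. *)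

theory Defs
  imports "HOL-Probability.Probability"
begin

text \<open>Since h is injective on inputs, an input
 tuple containing the hash value h(c) of a child c is identified with the
 tuple containing the input of c itself (symbolic representation).\<close>
datatype 'a inp = Chr 'a | DupIn nat nat "'a inp" | IncIn nat "'a inp list"

datatype 'a ddt = Lf 'a | DupN nat "'a ddt list" | IncN nat "'a ddt list"

fun ddt_inp :: "'a ddt \<Rightarrow> 'a inp" where
  "ddt_inp (Lf a) = Chr a"
| "ddt_inp (DupN l []) = DupIn l 0 (IncIn l [])"
| "ddt_inp (DupN l (c # cs)) = DupIn l (Suc (length cs)) (ddt_inp c)"
| "ddt_inp (IncN l cs) = IncIn l (map ddt_inp cs)"

fun runs :: "('b \<Rightarrow> 'b \<Rightarrow> bool) \<Rightarrow> 'b list \<Rightarrow> 'b list list" where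
  "runs R [] = []"
| "runs R [x] = [[x]]"
| "runs R (x # y # xs) =
     (case runs R (y # xs) of
        r # rs \<Rightarrow> (if R x y then (x # r) # rs else [x] # r # rs)
      | [] \<Rightarrow> [[x]])"

definition ddt_step :: "('a inp \<Rightarrow> real) \<Rightarrow> nat \<Rightarrow> 'a ddt list \<Rightarrow> 'a ddt list" where
  "ddt_step h l nodes =
     (if odd l then map (DupN l) (runs (\<lambda>u v. h (ddt_inp u) = h (ddt_inp v)) nodes)
      else map (IncN l) (runs (\<lambda>u v. h (ddt_inp u) < h (ddt_inp v)) nodes))"

fun ddt_level :: "('a inp \<Rightarrow> real) \<Rightarrow> 'a list \<Rightarrow> nat \<Rightarrow> 'a ddt list" where
  "ddt_level h x 0 = map Lf x"
| "ddt_level h x (Suc l) = ddt_step h (Suc l) (ddt_level h x l)"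

definition ddt_terminates :: "('a inp \<Rightarrow> real) \<Rightarrow> 'a list \<Rightarrow> bool" where
  "ddt_terminates h x \<longleftrightarrow> (\<exists>l. length (ddt_level h x l) = 1)"

definition ddt_height :: "('a inp \<Rightarrow> real) \<Rightarrow> 'a list \<Rightarrow> nat" where
  "ddt_height h x = (LEAST l. length (ddt_level h x l) = 1)"

definition ddt_root :: "('a inp \<Rightarrow> real) \<Rightarrow> 'a list \<Rightarrow> 'a ddt" where
  "ddt_root h x = hd (ddt_level h x (ddt_height h x))"

fun nleaves :: "'a ddt \<Rightarrow> nat" where
  "nleaves (Lf a) = 1"
| "nleaves (DupN l cs) = sum_list (map nleaves cs)"
| "nleaves (IncN l cs) = sum_list (map nleaves cs)"

text \<open>Number of increasing nodes on the path from the node to its leaf with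
 0-based index i (leaves counted left to right).\<close>
fun inc_path :: "'a ddt \<Rightarrow> nat \<Rightarrow> nat"
and inc_path_list :: "'a ddt list \<Rightarrow> nat \<Rightarrow> nat" where
  "inc_path (Lf a) i = 0"
| "inc_path (DupN l cs) i = inc_path_list cs i"
| "inc_path (IncN l cs) i = Suc (inc_path_list cs i)"
| "inc_path_list [] i = 0"
| "inc_path_list (c # cs) i =
     (if i < nleaves c then inc_path c i else inc_path_list cs (i - nleaves c))"

text \<open>Random hash function: i.i.d. uniform values in [0,1] for every input;
 this gives a uniformly random relative order on every finite set of inputs
 (injective almost surely).\<close>
definition hash_space :: "('a inp \<Rightarrow> real) measure" where
  "hash_space = (\<Pi>\<^sub>M _\<in>UNIV. uniform_measure lborel {0..1})"

end

theory Submission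
  imports Defs
begin

text \<open>After a duplicate level no two adjacent nodes have the same hash input, so at the
  following increasing level each adjacent pair is a descent, i.e. a run boundary, with
  probability at most \<open>3/4\<close>. The inputs of different levels carry different level numbers,
  so different levels see independent hash values; conditioning on the levels built so far,
  the number of nodes minus one shrinks in expectation by the factor \<open>3/4\<close> with every pair
  of levels. Hence after \<open>2K + 1\<close> levels the tree has reached its root with probability at
  least \<open>1 - (n - 1) (3/4)^K\<close>, and a root-to-leaf path contains at most as many increasing
  nodes as the tree has levels. Taking \<open>K\<close> of order \<open>(c + 1) log\<^sub>2 n\<close> gives the claim.\<close>

section \<open>Maximal runs\<close>

lemma runs_concat: "concat (runs R xs) = xs"
  by (induction R xs rule: runs.induct) (auto split: list.splits)

lemma Nil_notin_runs: "[] \<notin> set (runs R xs)"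
  by (induction R xs rule: runs.induct) (auto split: list.splits)

lemma runs_Cons_not_Nil: "runs R (y # xs) \<noteq> []"
  using runs_concat[of R "y # xs"] by auto

lemma runs_Cons_hd:
  assumes "runs R (y # xs) = r # rs"
  shows "r \<noteq> [] \<and> hd r = y"
proof -
  have "r \<noteq> []" using Nil_notin_runs[of R "y # xs"] assms by auto
  moreover have "concat (r # rs) = y # xs" using runs_concat[of R "y # xs"] assms by simp
  ultimately show ?thesis by (cases r) auto
qed

lemma set_runs_subset: "r \<in> set (runs R xs) \<Longrightarrow> set r \<subseteq> set xs"
  using runs_concat[of R xs] by (metis set_concat UN_upper)

lemma runs_cong:
  "(\<And>u v. u \<in> set xs \<Longrightarrow> v \<in> set xs \<Longrightarrow> R u v = R' u v) \<Longrightarrow> runs R xs = runs R' xs"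
  by (induction R xs rule: runs.induct) (auto split: list.splits)

lemma length_runs_le: "length (runs R xs) \<le> length xs"
  by (induction R xs rule: runs.induct) (auto split: list.splits)

lemma length_runs_minus_one:
  "length (runs R xs) - 1 = (\<Sum>j<length xs - 1. if R (xs ! j) (xs ! Suc j) then 0 else 1)"
proof (induction R xs rule: runs.induct)
  case (3 R x y xs)
  obtain r rs where rs: "runs R (y # xs) = r # rs"
    using runs_Cons_not_Nil by (metis list.exhaust)
  have "(\<Sum>j<length (x # y # xs) - 1. if R ((x # y # xs) ! j) ((x # y # xs) ! Suc j) then 0 else 1)
      = (if R x y then 0 else 1)
        + (\<Sum>j<length (y # xs) - 1. if R ((y # xs) ! j) ((y # xs) ! Suc j) then 0 else (1::nat))"
    by (simp add: sum.lessThan_Suc_shift del: sum.lessThan_Suc)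
  moreover have "length (runs R (x # y # xs)) - 1 = (if R x y then 0 else 1) + (length (runs R (y # xs)) - 1)"
    using rs by simp
  ultimately show ?case using 3 by simp
qed auto

lemma successively_runs_eq:
  "successively (\<lambda>r s. f (hd r) \<noteq> f (hd s)) (runs (\<lambda>u v. f u = f v) xs)"
proof (induction "\<lambda>u v. f u = f v" xs rule: runs.induct)
  case (3 x y xs)
  obtain r rs where rs: "runs (\<lambda>u v. f u = f v) (y # xs) = r # rs"
    using runs_Cons_not_Nil by (metis list.exhaust)
  show ?case using 3 rs runs_Cons_hd[OF rs] by (cases rs) auto
qed auto

section \<open>Levels of the tree\<close>

fun inp_level :: "'a inp \<Rightarrow> nat" where
  "inp_level (Chr a) = 0"
| "inp_level (DupIn l k c) = l"
| "inp_level (IncIn l cs) = l"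

abbreviation at_level :: "nat \<Rightarrow> 'a ddt list \<Rightarrow> bool" where
  "at_level l T \<equiv> \<forall>u\<in>set T. inp_level (ddt_inp u) = l"

fun ddt_steps :: "('a inp \<Rightarrow> real) \<Rightarrow> nat \<Rightarrow> 'a ddt list \<Rightarrow> nat \<Rightarrow> 'a ddt list" where
  "ddt_steps h l T 0 = T"
| "ddt_steps h l T (Suc k) = ddt_step h (l + Suc k) (ddt_steps h l T k)"

lemma ddt_level_eq_ddt_steps: "ddt_level h x k = ddt_steps h 0 (map Lf x) k"
  by (induction k) auto

lemma ddt_steps_add: "ddt_steps h l T (k + k') = ddt_steps h (l + k) (ddt_steps h l T k) k'"
  by (induction k') (auto simp: add.assoc)

lemma at_level_ddt_step: "at_level m (ddt_step h m T)"
proof -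
  have "inp_level (ddt_inp (DupN m cs)) = m" for cs :: "'a ddt list"
    by (cases cs) auto
  then show ?thesis by (auto simp: ddt_step_def)
qed

lemma at_level_ddt_steps: "at_level l T \<Longrightarrow> at_level (l + k) (ddt_steps h l T k)"
  by (induction k) (simp_all add: at_level_ddt_step)

lemma ddt_step_cong:
  assumes "\<And>u. u \<in> set T \<Longrightarrow> h (ddt_inp u) = h' (ddt_inp u)"
  shows "ddt_step h m T = ddt_step h' m T"
proof -
  have "runs (\<lambda>u v. h (ddt_inp u) = h (ddt_inp v)) T = runs (\<lambda>u v. h' (ddt_inp u) = h' (ddt_inp v)) T"
    "runs (\<lambda>u v. h (ddt_inp u) < h (ddt_inp v)) T = runs (\<lambda>u v. h' (ddt_inp u) < h' (ddt_inp v)) T"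
    by (auto intro!: runs_cong simp: assms)
  then show ?thesis unfolding ddt_step_def by simp
qed

lemma ddt_steps_cong:
  assumes "at_level l T" and "\<And>a. l \<le> inp_level a \<Longrightarrow> inp_level a < l + k \<Longrightarrow> h a = h' a"
  shows "ddt_steps h l T k = ddt_steps h' l T k"
  using assms(2)
proof (induction k)
  case (Suc k)
  then have "ddt_steps h l T k = ddt_steps h' l T k" by auto
  then show ?case using Suc.prems at_level_ddt_steps[OF assms(1), of h k]
    by (auto intro!: ddt_step_cong)
qed simp

lemma length_ddt_step_le: "length (ddt_step h m T) \<le> length T"
  by (simp add: ddt_step_def length_runs_le)

lemma ddt_level_not_Nil: "x \<noteq> [] \<Longrightarrow> ddt_level h x l \<noteq> []"
proof (induction l)
  case (Suc l)
  then obtain y ys where "ddt_level h x l = y # ys" by (meson list.exhaust)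
  then show ?case by (auto simp: ddt_step_def runs_Cons_not_Nil)
qed simp

lemma distinct_adj_ddt_step_odd:
  assumes "odd m"
  shows "distinct_adj (map ddt_inp (ddt_step h m T))"
proof -
  let ?R = "runs (\<lambda>u v. h (ddt_inp u) = h (ddt_inp v)) T"
  have "successively (\<lambda>r s. ddt_inp (DupN m r) \<noteq> ddt_inp (DupN m s)) ?R"
  proof (rule successively_mono[OF successively_runs_eq])
    fix r s assume "r \<in> set ?R" "s \<in> set ?R" and hd: "h (ddt_inp (hd r)) \<noteq> h (ddt_inp (hd s))"
    then have "r \<noteq> []" "s \<noteq> []" using Nil_notin_runs by metis+
    then obtain a r' b s' where "r = a # r'" "s = b # s'" by (meson list.exhaust)
    then show "ddt_inp (DupN m r) \<noteq> ddt_inp (DupN m s)" using hd by auto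
  qed
  then show ?thesis using assms by (simp add: ddt_step_def distinct_adj_def successively_map)
qed

lemma length_ddt_step_even:
  "even m \<Longrightarrow> length (ddt_step h m T) - 1
     = (\<Sum>j<length T - 1. if h (ddt_inp (T ! j)) < h (ddt_inp (T ! Suc j)) then 0 else 1)"
  unfolding ddt_step_def using length_runs_minus_one[of "\<lambda>u v. h (ddt_inp u) < h (ddt_inp v)" T]
  by simp

lemma inc_path_list_le: "(\<And>c i. c \<in> set cs \<Longrightarrow> inc_path c i \<le> B) \<Longrightarrow> inc_path_list cs i \<le> B"
  by (induction cs arbitrary: i) auto

lemma inc_path_le_level: "t \<in> set (ddt_level h x l) \<Longrightarrow> inc_path t i \<le> l"
proof (induction l arbitrary: t i)
  case (Suc l)
  then obtain r where r: "r \<in> set (runs (\<lambda>u v. h (ddt_inp u) = h (ddt_inp v)) (ddt_level h x l)) \<and> t = DupN (Suc l) r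
     \<or> r \<in> set (runs (\<lambda>u v. h (ddt_inp u) < h (ddt_inp v)) (ddt_level h x l)) \<and> t = IncN (Suc l) r"
    by (auto simp: ddt_step_def split: if_splits)
  then have "set r \<subseteq> set (ddt_level h x l)" using set_runs_subset by blast
  then have "inc_path_list r i \<le> l" by (intro inc_path_list_le) (auto intro: Suc.IH)
  then show ?case using r by auto
qed auto

lemma inc_path_root_le:
  assumes "length (ddt_level h x L) = 1"
  shows "ddt_terminates h x \<and> inc_path (ddt_root h x) i \<le> L"
proof
  show "ddt_terminates h x" using assms unfolding ddt_terminates_def by blast
  have "length (ddt_level h x (ddt_height h x)) = 1"
    unfolding ddt_height_def by (rule LeastI[of _ L]) (rule assms)
  then have "ddt_root h x \<in> set (ddt_level h x (ddt_height h x))"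
    unfolding ddt_root_def by (cases "ddt_level h x (ddt_height h x)") auto
  moreover have "ddt_height h x \<le> L" unfolding ddt_height_def by (rule Least_le) (rule assms)
  ultimately show "inc_path (ddt_root h x) i \<le> L" using inc_path_le_level le_trans by blast
qed

lemma ddt_terminates_root_iff:
  "ddt_terminates h x \<and> Q (ddt_root h x) \<longleftrightarrow>
   (\<exists>l. length (ddt_level h x l) = 1 \<and> (\<forall>l'\<in>{..<l}. length (ddt_level h x l') \<noteq> 1)
        \<and> Q (hd (ddt_level h x l)))"
proof
  assume *: "ddt_terminates h x \<and> Q (ddt_root h x)"
  then have "\<exists>l. length (ddt_level h x l) = 1" unfolding ddt_terminates_def by blast
  then have "length (ddt_level h x (ddt_height h x)) = 1"
    "\<forall>l'\<in>{..<ddt_height h x}. length (ddt_level h x l') \<noteq> 1"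
    unfolding ddt_height_def by (auto intro: LeastI_ex dest: not_less_Least)
  then show "\<exists>l. length (ddt_level h x l) = 1 \<and> (\<forall>l'\<in>{..<l}. length (ddt_level h x l') \<noteq> 1)
      \<and> Q (hd (ddt_level h x l))"
    using * unfolding ddt_root_def by blast
next
  assume "\<exists>l. length (ddt_level h x l) = 1 \<and> (\<forall>l'\<in>{..<l}. length (ddt_level h x l') \<noteq> 1)
      \<and> Q (hd (ddt_level h x l))"
  then obtain l where l: "length (ddt_level h x l) = 1" "\<forall>l'\<in>{..<l}. length (ddt_level h x l') \<noteq> 1"
    "Q (hd (ddt_level h x l))" by blast
  then have "ddt_height h x = l" unfolding ddt_height_def
    by (intro Least_equality) (auto simp: not_less[symmetric])
  then show "ddt_terminates h x \<and> Q (ddt_root h x)"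
    using l unfolding ddt_terminates_def ddt_root_def by auto
qed

section \<open>Measurability\<close>

text \<open>A level depends on the hash function only through finitely many comparisons
  between hash values of nodes of the previous level.\<close>

definition hash_rel :: "('a inp \<Rightarrow> real) \<Rightarrow> nat \<Rightarrow> 'a ddt \<Rightarrow> 'a ddt \<Rightarrow> bool" where
  "hash_rel h m u v =
     (if odd m then h (ddt_inp u) = h (ddt_inp v) else h (ddt_inp u) < h (ddt_inp v))"

definition step_by_rel :: "nat \<Rightarrow> ('a ddt \<times> 'a ddt) set \<Rightarrow> 'a ddt list \<Rightarrow> 'a ddt list" where
  "step_by_rel m X T = map (if odd m then DupN m else IncN m) (runs (\<lambda>u v. (u, v) \<in> X) T)"

lemma ddt_step_eq_step_by_rel:
  "ddt_step h m T = step_by_rel m {p \<in> set T \<times> set T. hash_rel h m (fst p) (snd p)} T"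
proof -
  have "runs (\<lambda>u v. (u, v) \<in> {p \<in> set T \<times> set T. hash_rel h m (fst p) (snd p)}) T
      = runs (hash_rel h m) T"
    by (rule runs_cong) auto
  moreover have "runs (hash_rel h m) T =
      (if odd m then runs (\<lambda>u v. h (ddt_inp u) = h (ddt_inp v)) T
       else runs (\<lambda>u v. h (ddt_inp u) < h (ddt_inp v)) T)"
    by (simp add: hash_rel_def [abs_def])
  ultimately show ?thesis by (simp add: ddt_step_def step_by_rel_def)
qed

lemma ddt_step_eq_iff:
  "ddt_step h m T = P \<longleftrightarrow> (\<exists>X\<in>Pow (set T \<times> set T). step_by_rel m X T = P \<and>
     (\<forall>p\<in>set T \<times> set T. hash_rel h m (fst p) (snd p) \<longleftrightarrow> p \<in> X))"
    (is "_ \<longleftrightarrow> (\<exists>X\<in>_. _ \<and> ?agree X)")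
proof
  assume "ddt_step h m T = P"
  then show "\<exists>X\<in>Pow (set T \<times> set T). step_by_rel m X T = P \<and> ?agree X"
    by (intro bexI[of _ "{p \<in> set T \<times> set T. hash_rel h m (fst p) (snd p)}"])
      (auto simp: ddt_step_eq_step_by_rel)
next
  assume "\<exists>X\<in>Pow (set T \<times> set T). step_by_rel m X T = P \<and> ?agree X"
  then obtain X where X: "X \<subseteq> set T \<times> set T" "step_by_rel m X T = P" "?agree X" by auto
  have "runs (\<lambda>u v. (u, v) \<in> X) T
      = runs (\<lambda>u v. (u, v) \<in> {p \<in> set T \<times> set T. hash_rel h m (fst p) (snd p)}) T"
    by (rule runs_cong) (use X in auto)
  then show "ddt_step h m T = P"
    using X(2) by (simp add: ddt_step_eq_step_by_rel step_by_rel_def)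
qed

lemma finite_range_ddt_step: "finite (range (\<lambda>h. ddt_step h m T))"
proof (rule finite_subset)
  show "range (\<lambda>h. ddt_step h m T) \<subseteq> (\<lambda>X. step_by_rel m X T) ` Pow (set T \<times> set T)"
    by (auto simp: ddt_step_eq_step_by_rel)
qed simp

lemma finite_range_ddt_steps: "finite (range (\<lambda>h. ddt_steps h l T k))"
proof (induction k)
  case (Suc k)
  have "range (\<lambda>h. ddt_steps h l T (Suc k))
      \<subseteq> (\<Union>S\<in>range (\<lambda>h. ddt_steps h l T k). range (\<lambda>h. ddt_step h (l + Suc k) S))"
    by auto
  then show ?case by (rule finite_subset) (intro finite_UN_I Suc finite_range_ddt_step)
qed simp

abbreviation unit_uniform :: "real measure" where
  "unit_uniform \<equiv> uniform_measure lborel {0..1}"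

lemma measurable_hash_component:
  "a \<in> K \<Longrightarrow> (\<lambda>g. g a) \<in> borel_measurable (PiM K (\<lambda>_. unit_uniform))"
proof -
  assume "a \<in> K"
  then have "(\<lambda>g. g a) \<in> measurable (PiM K (\<lambda>_. unit_uniform)) unit_uniform"
    by (rule measurable_component_singleton)
  moreover have "measurable (PiM K (\<lambda>_. unit_uniform)) unit_uniform = measurable (PiM K (\<lambda>_. unit_uniform)) borel"
    by (rule measurable_cong_sets) auto
  ultimately show ?thesis by simp
qed

lemma pred_hash_rel:
  "ddt_inp u \<in> K \<Longrightarrow> ddt_inp v \<in> K \<Longrightarrow>
   Measurable.pred (PiM K (\<lambda>_. unit_uniform)) (\<lambda>g. hash_rel g m u v)"
  using measurable_hash_component[of "ddt_inp u" K] measurable_hash_component[of "ddt_inp v" K]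
  unfolding hash_rel_def pred_def by (cases "odd m") (auto intro: borel_measurable_less borel_measurable_eq)

lemma pred_ddt_step_eq:
  assumes "\<And>u. u \<in> set T \<Longrightarrow> ddt_inp u \<in> K"
  shows "Measurable.pred (PiM K (\<lambda>_. unit_uniform)) (\<lambda>g. ddt_step g m T = P)"
proof -
  have "Measurable.pred (PiM K (\<lambda>_. unit_uniform)) (\<lambda>g. hash_rel g m (fst p) (snd p) \<longleftrightarrow> p \<in> X)"
    if "p \<in> set T \<times> set T" for p and X :: "('a ddt \<times> 'a ddt) set"
    using that assms by (intro pred_intros_logic(6) pred_hash_rel) (auto simp: pred_def)
  then show ?thesis unfolding ddt_step_eq_iff
    by (intro pred_intros_finite(4) pred_intros_logic(3) pred_intros_finite(3)) (auto simp: pred_def)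
qed

lemma pred_ddt_steps_eq:
  assumes "at_level l T" and "{a. l \<le> inp_level a \<and> inp_level a < l + k} \<subseteq> K"
  shows "Measurable.pred (PiM K (\<lambda>_. unit_uniform)) (\<lambda>g. ddt_steps g l T k = P)"
  using assms(2)
proof (induction k arbitrary: P)
  case 0
  then show ?case by (cases "T = P") (auto simp: pred_def)
next
  case (Suc k)
  have "ddt_steps g l T (Suc k) = P \<longleftrightarrow>
      (\<exists>S\<in>range (\<lambda>h. ddt_steps h l T k). ddt_steps g l T k = S \<and> ddt_step g (l + Suc k) S = P)" for g
    by auto
  moreover have "Measurable.pred (PiM K (\<lambda>_. unit_uniform)) (\<lambda>g. ddt_step g (l + Suc k) S = P)"
    if "S \<in> range (\<lambda>h. ddt_steps h l T k)" for S
    using that Suc.prems at_level_ddt_steps[OF assms(1)] by (intro pred_ddt_step_eq) fastforce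
  moreover have "Measurable.pred (PiM K (\<lambda>_. unit_uniform)) (\<lambda>g. ddt_steps g l T k = S)" for S
    using Suc.prems by (intro Suc.IH) auto
  ultimately show ?case
    by (simp only:) (intro pred_intros_finite(4) finite_range_ddt_steps pred_intros_logic(3))
qed

lemma pred_ddt_steps:
  assumes "at_level l T" and "{a. l \<le> inp_level a \<and> inp_level a < l + k} \<subseteq> K"
  shows "Measurable.pred (PiM K (\<lambda>_. unit_uniform)) (\<lambda>g. Q (ddt_steps g l T k))"
proof -
  have "Q (ddt_steps g l T k) \<longleftrightarrow> (\<exists>S\<in>range (\<lambda>h. ddt_steps h l T k). ddt_steps g l T k = S \<and> Q S)" for g
    by auto
  then show ?thesis
    by (simp only:) (intro pred_intros_finite(4) finite_range_ddt_steps pred_intros_logic(3)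
        pred_ddt_steps_eq[OF assms]; simp add: pred_def)
qed

lemma prob_space_unit_uniform: "prob_space unit_uniform"
  by (rule prob_space_uniform_measure) auto

lemma prob_space_hash_space: "prob_space (hash_space :: ('a inp \<Rightarrow> real) measure)"
  unfolding hash_space_def by (rule prob_space_PiM) (rule prob_space_unit_uniform)

lemma space_hash_space: "space hash_space = UNIV"
  by (simp add: hash_space_def space_PiM)

lemma sets_ddt_steps:
  "at_level l T \<Longrightarrow> {h. Q (ddt_steps h l T k)} \<in> sets (hash_space :: ('a inp \<Rightarrow> real) measure)"
  using pred_ddt_steps[where K = UNIV and Q = Q and l = l and T = T and k = k]
  by (simp add: pred_def hash_space_def[symmetric] space_hash_space)

lemma pred_ddt_level: "Measurable.pred (hash_space :: ('a inp \<Rightarrow> real) measure) (\<lambda>h. Q (ddt_level h x l))"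
  using sets_ddt_steps[where l = 0 and T = "map Lf x" and Q = Q and k = l]
  by (simp add: pred_def space_hash_space ddt_level_eq_ddt_steps)

lemma pred_ddt_root:
  "Measurable.pred (hash_space :: ('a inp \<Rightarrow> real) measure) (\<lambda>h. ddt_terminates h x \<and> Q (ddt_root h x))"
  unfolding ddt_terminates_root_iff
  by (intro pred_intros_countable(2) pred_intros_logic(3) pred_intros_finite(3) pred_ddt_level) simp

section \<open>Independence of the levels\<close>

lemma indep_vars_hash_space:
  "prob_space.indep_vars (hash_space :: ('a inp \<Rightarrow> real) measure) (\<lambda>_. unit_uniform) (\<lambda>a h. h a) UNIV"
proof -
  interpret prob_space "hash_space :: ('a inp \<Rightarrow> real) measure" by (rule prob_space_hash_space)
  have "random_variable unit_uniform (\<lambda>h. h a)" for a :: "'a inp"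
    unfolding hash_space_def by (rule measurable_component_singleton) simp
  moreover have "distr hash_space unit_uniform (\<lambda>h. h a) = unit_uniform" for a :: "'a inp"
    unfolding hash_space_def by (rule distr_PiM_component) (auto simp: prob_space_unit_uniform)
  moreover have "(\<lambda>h :: 'a inp \<Rightarrow> real. restrict h UNIV) = (\<lambda>h. h)"
    by (auto simp: restrict_def)
  ultimately show ?thesis
    by (subst indep_vars_iff_distr_eq_PiM) (simp_all add: hash_space_def distr_id)
qed

lemma emeasure_hash_space_conj_indep:
  fixes QA QB :: "('a inp \<Rightarrow> real) \<Rightarrow> bool" and KA KB :: "'a inp set"
  assumes "KA \<inter> KB = {}"
    and PA: "Measurable.pred (PiM KA (\<lambda>_. unit_uniform)) PA"
    and PB: "Measurable.pred (PiM KB (\<lambda>_. unit_uniform)) PB"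
    and QA: "\<And>h. QA h = PA (restrict h KA)" and QB: "\<And>h. QB h = PB (restrict h KB)"
  shows "emeasure hash_space {h. QA h \<and> QB h} = emeasure hash_space {h. QA h} * emeasure hash_space {h. QB h}"
proof -
  interpret prob_space "hash_space :: ('a inp \<Rightarrow> real) measure" by (rule prob_space_hash_space)
  let ?A = "{g\<in>space (PiM KA (\<lambda>_. unit_uniform)). PA g}" and ?B = "{g\<in>space (PiM KB (\<lambda>_. unit_uniform)). PB g}"
  have "indep_var (PiM KA (\<lambda>_. unit_uniform)) (\<lambda>h. restrict h KA) (PiM KB (\<lambda>_. unit_uniform)) (\<lambda>h. restrict h KB)"
    using indep_var_restrict[OF indep_vars_hash_space, of KA KB] assms(1) by simp
  moreover have "?A \<in> sets (PiM KA (\<lambda>_. unit_uniform))" "?B \<in> sets (PiM KB (\<lambda>_. unit_uniform))"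
    using PA PB by (simp_all add: pred_def)
  ultimately have "prob ((\<lambda>h. (restrict h KA, restrict h KB)) -` (?A \<times> ?B) \<inter> space hash_space)
      = prob ((\<lambda>h. restrict h KA) -` ?A \<inter> space hash_space) * prob ((\<lambda>h. restrict h KB) -` ?B \<inter> space hash_space)"
    by (rule indep_varD)
  moreover have "(\<lambda>h. (restrict h KA, restrict h KB)) -` (?A \<times> ?B) \<inter> space hash_space = {h. QA h \<and> QB h}"
    "(\<lambda>h. restrict h KA) -` ?A \<inter> space hash_space = {h. QA h}"
    "(\<lambda>h. restrict h KB) -` ?B \<inter> space hash_space = {h. QB h}"
    by (auto simp: space_hash_space space_PiM QA QB)
  ultimately show ?thesis by (simp add: emeasure_eq_measure ennreal_mult)
qed

text \<open>The first \<open>k\<close> levels above level \<open>l\<close> read only hash values of inputs of level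
  below \<open>l + k\<close>, the later levels only those of higher level.\<close>

lemma emeasure_ddt_steps_indep:
  fixes T S :: "'a ddt list"
  assumes T: "at_level l T" and S: "at_level (l + k) S"
  shows "emeasure (hash_space :: ('a inp \<Rightarrow> real) measure) {h. ddt_steps h l T k = S \<and> Q (ddt_steps h (l + k) S k')}
    = emeasure hash_space {h. ddt_steps h l T k = S} * emeasure hash_space {h. Q (ddt_steps h (l + k) S k')}"
proof (rule emeasure_hash_space_conj_indep[where KA = "{a. inp_level a < l + k}" and KB = "{a. l + k \<le> inp_level a}"])
  show "Measurable.pred (PiM {a. inp_level a < l + k} (\<lambda>_. unit_uniform)) (\<lambda>g. ddt_steps g l T k = S)"
    by (rule pred_ddt_steps_eq[OF T]) auto
  show "Measurable.pred (PiM {a. l + k \<le> inp_level a} (\<lambda>_. unit_uniform)) (\<lambda>g. Q (ddt_steps g (l + k) S k'))"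
    by (rule pred_ddt_steps[OF S]) auto
  show "ddt_steps h l T k = S \<longleftrightarrow> ddt_steps (restrict h {a. inp_level a < l + k}) l T k = S" for h
    using ddt_steps_cong[OF T, where h = h and h' = "restrict h {a. inp_level a < l + k}" and k = k] by auto
  show "Q (ddt_steps h (l + k) S k') \<longleftrightarrow> Q (ddt_steps (restrict h {a. l + k \<le> inp_level a}) (l + k) S k')" for h
    using ddt_steps_cong[OF S, where h = h and h' = "restrict h {a. l + k \<le> inp_level a}" and k = k'] by auto
qed auto

lemma emeasure_ddt_steps_le_nn_integral:
  fixes T :: "'a ddt list"
  assumes T: "at_level l T"
    and G: "\<And>S. S \<in> range (\<lambda>h. ddt_steps h l T k) \<Longrightarrow>
       emeasure (hash_space :: ('a inp \<Rightarrow> real) measure) {h. 2 \<le> length (ddt_steps h (l + k) S k')} \<le> G S"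
  shows "emeasure (hash_space :: ('a inp \<Rightarrow> real) measure) {h. 2 \<le> length (ddt_steps h l T (k + k'))}
     \<le> (\<integral>\<^sup>+ h. G (ddt_steps h l T k) \<partial>hash_space)"
proof -
  define F where "F = range (\<lambda>h. ddt_steps h l T k)"
  define E where "E S = {h. ddt_steps h l T k = S \<and> 2 \<le> length (ddt_steps h (l + k) S k')}" for S
  have fin: "finite F" unfolding F_def by (rule finite_range_ddt_steps)
  have S: "at_level (l + k) S" if "S \<in> F" for S
    using that at_level_ddt_steps[OF T] unfolding F_def by auto
  have first: "{h. ddt_steps h l T k = S} \<in> sets (hash_space :: ('a inp \<Rightarrow> real) measure)" for S
    using sets_ddt_steps[OF T, of "\<lambda>X. X = S"] by simp
  have "E S \<in> sets hash_space" if "S \<in> F" for S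
    using first[of S] sets_ddt_steps[OF S[OF that], of "\<lambda>X. 2 \<le> length X"]
    by (simp add: E_def Collect_conj_eq)
  moreover have "{h. 2 \<le> length (ddt_steps h l T (k + k'))} = (\<Union>S\<in>F. E S)"
    unfolding E_def F_def by (auto simp: ddt_steps_add)
  ultimately have "emeasure hash_space {h. 2 \<le> length (ddt_steps h l T (k + k'))} \<le> (\<Sum>S\<in>F. emeasure hash_space (E S))"
    using emeasure_subadditive_finite[OF fin, of E hash_space] by auto
  also have "\<dots> \<le> (\<Sum>S\<in>F. emeasure hash_space {h. ddt_steps h l T k = S} * G S)"
  proof (rule sum_mono)
    fix S assume "S \<in> F"
    then show "emeasure hash_space (E S) \<le> emeasure hash_space {h. ddt_steps h l T k = S} * G S"
      unfolding E_def emeasure_ddt_steps_indep[where Q = "\<lambda>X. 2 \<le> length X", OF T S[OF \<open>S \<in> F\<close>]]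
      by (intro mult_left_mono G) (auto simp: F_def)
  qed
  also have "\<dots> = (\<integral>\<^sup>+ h. (\<Sum>S\<in>F. G S * indicator {h. ddt_steps h l T k = S} h) \<partial>hash_space)"
    using first by (subst nn_integral_sum) (auto simp: nn_integral_cmult_indicator mult.commute)
  also have "\<dots> = (\<integral>\<^sup>+ h. G (ddt_steps h l T k) \<partial>hash_space)"
  proof (rule nn_integral_cong)
    fix h :: "'a inp \<Rightarrow> real"
    have "(\<Sum>S\<in>F. G S * indicator {h. ddt_steps h l T k = S} h) = (\<Sum>S\<in>F. if S = ddt_steps h l T k then G S else 0)"
      by (intro sum.cong) (auto simp: indicator_def)
    also have "\<dots> = G (ddt_steps h l T k)" using fin by (simp add: F_def)
    finally show "(\<Sum>S\<in>F. G S * indicator {h. ddt_steps h l T k = S} h) = G (ddt_steps h l T k)" .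
  qed
  finally show ?thesis .
qed

section \<open>Shrinking of the levels\<close>

lemma emeasure_unit_uniform_half:
  "emeasure unit_uniform {..<1/2} = ennreal (1/2)" "emeasure unit_uniform {1/2..} = ennreal (1/2)"
proof -
  have "{0..1} \<inter> {..<1/2::real} = {0..<1/2}" "{0..1} \<inter> {(1/2::real)..} = {1/2..1}" by auto
  then show "emeasure unit_uniform {..<1/2} = ennreal (1/2)" "emeasure unit_uniform {1/2..} = ennreal (1/2)"
    by (simp_all add: emeasure_uniform_measure divide_ennreal_def)
qed

text \<open>The true probability is \<open>1/2\<close>; the event \<open>h a < 1/2 \<le> h b\<close> of probability \<open>1/4\<close>
  already gives this weaker bound.\<close>

lemma emeasure_not_less:
  assumes "a \<noteq> b"
  shows "emeasure (hash_space :: ('a inp \<Rightarrow> real) measure) {h. \<not> h a < h b} \<le> ennreal (3/4)"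
proof -
  interpret P: product_prob_space "\<lambda>_::'a inp. unit_uniform" UNIV
    by (simp add: product_prob_space_def product_sigma_finite_def prob_space_unit_uniform
        prob_space_imp_sigma_finite product_prob_space_axioms_def)
  interpret prob_space "hash_space :: ('a inp \<Rightarrow> real) measure" by (rule prob_space_hash_space)
  define X where "X i = (if i = a then {..<1/2} else {1/2::real..})" for i
  define E where "E = {h \<in> space hash_space. \<forall>i\<in>{a, b}. h i \<in> X i}"
  have "emeasure hash_space E = (\<Prod>i\<in>{a, b}. emeasure unit_uniform (X i))"
    unfolding E_def hash_space_def by (rule P.emeasure_PiM_Collect) (auto simp: X_def)
  also have "\<dots> = ennreal (1/2) * ennreal (1/2)"
    using assms by (simp add: X_def emeasure_unit_uniform_half del: emeasure_uniform_measure)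
  also have "\<dots> = ennreal (1/4)" using ennreal_mult[of "1/2" "1/2"] by simp
  finally have "emeasure hash_space E = ennreal (1/4)" .
  moreover have E: "E \<in> sets hash_space" unfolding E_def hash_space_def
    by (rule sets.sets_Collect_finite_All) (auto simp: X_def intro!: sets_Collect_single)
  ultimately have "prob (space hash_space - E) = 3/4" by (simp add: emeasure_eq_measure prob_compl)
  moreover have "{h. \<not> h a < h b} \<subseteq> space hash_space - E"
    using assms by (auto simp: E_def X_def space_hash_space)
  then have "prob {h. \<not> h a < h b} \<le> prob (space hash_space - E)"
    using E by (intro finite_measure_mono) auto
  ultimately show ?thesis by (simp add: emeasure_eq_measure)
qed

lemma sets_not_less: "{h. \<not> h a < h b} \<in> sets (hash_space :: ('a inp \<Rightarrow> real) measure)"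
proof -
  have "Measurable.pred (PiM UNIV (\<lambda>_. unit_uniform)) (\<lambda>h. \<not> h a < h b)"
    using measurable_hash_component[of a UNIV] measurable_hash_component[of b UNIV]
    unfolding pred_def by (auto intro: borel_measurable_less)
  then show ?thesis by (simp add: pred_def hash_space_def[symmetric] space_hash_space)
qed

lemma nn_integral_length_ddt_step_even:
  assumes distinct: "distinct_adj (map ddt_inp T)" and "even m"
  shows "(\<integral>\<^sup>+ h. of_nat (length (ddt_step h m T) - 1) * c \<partial>(hash_space :: ('a inp \<Rightarrow> real) measure))
     \<le> of_nat (length T - 1) * ennreal (3/4) * c"
proof -
  define D where "D j = {h :: 'a inp \<Rightarrow> real. \<not> h (ddt_inp (T ! j)) < h (ddt_inp (T ! Suc j))}" for j
  have D[measurable]: "D j \<in> sets hash_space" for j unfolding D_def by (rule sets_not_less)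
  have "of_nat (length (ddt_step h m T) - 1) * c = (\<Sum>j<length T - 1. c * indicator (D j) h)" for h
    unfolding length_ddt_step_even[OF \<open>even m\<close>] of_nat_sum sum_distrib_right
    by (intro sum.cong) (auto simp: D_def indicator_def)
  then have "(\<integral>\<^sup>+ h. of_nat (length (ddt_step h m T) - 1) * c \<partial>hash_space)
      = (\<Sum>j<length T - 1. \<integral>\<^sup>+ h. c * indicator (D j) h \<partial>hash_space)"
    by (simp only:) (rule nn_integral_sum, measurable)
  also have "\<dots> = (\<Sum>j<length T - 1. c * emeasure hash_space (D j))"
    by (intro sum.cong refl nn_integral_cmult_indicator D)
  also have "\<dots> \<le> (\<Sum>j<length T - 1. c * ennreal (3/4))"
  proof (intro sum_mono mult_left_mono)
    fix j assume "j \<in> {..<length T - 1}"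
    then have "ddt_inp (T ! j) \<noteq> ddt_inp (T ! Suc j)"
      using distinct by (auto simp: distinct_adj_conv_nth)
    then show "emeasure hash_space (D j) \<le> ennreal (3/4)" unfolding D_def by (rule emeasure_not_less)
  qed simp
  also have "\<dots> = of_nat (length T - 1) * ennreal (3/4) * c" by (simp add: ac_simps)
  finally show ?thesis .
qed

lemma emeasure_ddt_steps_not_root:
  fixes T :: "'a ddt list"
  assumes "odd l" and "at_level l T" and "distinct_adj (map ddt_inp T)"
  shows "emeasure (hash_space :: ('a inp \<Rightarrow> real) measure) {h. 2 \<le> length (ddt_steps h l T (2 * k))}
      \<le> of_nat (length T - 1) * ennreal (3/4) ^ k"
  using assms
proof (induction k arbitrary: l T)
  case 0
  interpret prob_space "hash_space :: ('a inp \<Rightarrow> real) measure" by (rule prob_space_hash_space)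
  show ?case
    by (cases "2 \<le> length T") (auto simp: space_hash_space[symmetric] emeasure_space_1)
next
  case (Suc k)
  have two_steps: "ddt_steps h l T 2 = ddt_step h (l + 2) (ddt_step h (l + 1) T)" for h
    by (simp add: numeral_2_eq_2)
  have "emeasure (hash_space :: ('a inp \<Rightarrow> real) measure) {h. 2 \<le> length (ddt_steps h l T (2 + 2 * k))}
      \<le> (\<integral>\<^sup>+ h. of_nat (length (ddt_steps h l T 2) - 1) * ennreal (3/4) ^ k \<partial>hash_space)"
  proof (rule emeasure_ddt_steps_le_nn_integral[OF Suc.prems(2)])
    fix S assume "S \<in> range (\<lambda>h. ddt_steps h l T 2)"
    then obtain h where S: "S = ddt_steps h l T 2" by auto
    have "odd (l + 2)" using Suc.prems(1) by simp
    moreover have "at_level (l + 2) S" using at_level_ddt_steps[OF Suc.prems(2)] S by auto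
    moreover have "distinct_adj (map ddt_inp S)"
      unfolding S two_steps using \<open>odd (l + 2)\<close> by (rule distinct_adj_ddt_step_odd)
    ultimately show "emeasure hash_space {h. 2 \<le> length (ddt_steps h (l + 2) S (2 * k))}
        \<le> of_nat (length S - 1) * ennreal (3/4) ^ k"
      by (rule Suc.IH)
  qed
  also have "\<dots> \<le> (\<integral>\<^sup>+ h. of_nat (length (ddt_step h (l + 1) T) - 1) * ennreal (3/4) ^ k \<partial>hash_space)"
    using length_ddt_step_le
    by (intro nn_integral_mono mult_right_mono) (auto simp: two_steps intro!: diff_le_mono)
  also have "\<dots> \<le> of_nat (length T - 1) * ennreal (3/4) * ennreal (3/4) ^ k"
    using Suc.prems by (intro nn_integral_length_ddt_step_even) simp_all
  finally show ?case by (simp add: mult.assoc)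
qed

lemma emeasure_ddt_level_not_root:
  fixes x :: "'a list"
  shows "emeasure (hash_space :: ('a inp \<Rightarrow> real) measure) {h. 2 \<le> length (ddt_level h x (1 + 2 * k))}
    \<le> of_nat (length x - 1) * ennreal (3/4) ^ k"
proof -
  interpret prob_space "hash_space :: ('a inp \<Rightarrow> real) measure" by (rule prob_space_hash_space)
  have "emeasure (hash_space :: ('a inp \<Rightarrow> real) measure) {h. 2 \<le> length (ddt_steps h (0 + 1) S (2 * k))}
      \<le> of_nat (length x - 1) * ennreal (3/4) ^ k"
    if "S \<in> range (\<lambda>h. ddt_steps h 0 (map Lf x) 1)" for S
  proof -
    from that obtain h where S: "S = ddt_step h 1 (map Lf x)" by auto
    have "emeasure hash_space {h. 2 \<le> length (ddt_steps h (0 + 1) S (2 * k))}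
        \<le> of_nat (length S - 1) * ennreal (3/4) ^ k"
      using at_level_ddt_step distinct_adj_ddt_step_odd[of 1 h "map Lf x"] S
      by (intro emeasure_ddt_steps_not_root) auto
    also have "\<dots> \<le> of_nat (length x - 1) * ennreal (3/4) ^ k"
      using length_ddt_step_le[of h 1 "map Lf x"] S by (intro mult_right_mono) auto
    finally show ?thesis .
  qed
  from emeasure_ddt_steps_le_nn_integral[where l = 0 and T = "map Lf x", OF _ this]
  show ?thesis by (simp add: ddt_level_eq_ddt_steps emeasure_space_1)
qed

section \<open>The height bound\<close>

lemma prob_inc_path_root_le:
  fixes x :: "'a list"
  assumes "x \<noteq> []"
  shows "1 - real (length x - 1) * (3/4) ^ k
    \<le> measure (hash_space :: ('a inp \<Rightarrow> real) measure)
        {h \<in> space hash_space. ddt_terminates h x \<and> inc_path (ddt_root h x) i \<le> 1 + 2 * k}"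
proof -
  interpret prob_space "hash_space :: ('a inp \<Rightarrow> real) measure" by (rule prob_space_hash_space)
  define Bad where "Bad = {h. 2 \<le> length (ddt_level h x (1 + 2 * k))}"
  have Bad: "Bad \<in> events"
    using pred_ddt_level[of "\<lambda>X. 2 \<le> length X" x "1 + 2 * k"] by (simp add: Bad_def pred_def space_hash_space)
  have "emeasure hash_space Bad \<le> of_nat (length x - 1) * ennreal (3/4) ^ k"
    unfolding Bad_def by (rule emeasure_ddt_level_not_root)
  also have "\<dots> = ennreal (real (length x - 1) * (3/4) ^ k)"
    by (simp add: ennreal_mult ennreal_power ennreal_of_nat_eq_real_of_nat)
  finally have "prob Bad \<le> real (length x - 1) * (3/4) ^ k"
    by (simp add: emeasure_eq_measure)
  then have "1 - real (length x - 1) * (3/4) ^ k \<le> prob (space hash_space - Bad)"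
    by (simp add: prob_compl[OF Bad])
  also have "\<dots> \<le> prob {h \<in> space hash_space. ddt_terminates h x \<and> inc_path (ddt_root h x) i \<le> 1 + 2 * k}"
  proof (rule finite_measure_mono)
    show "space hash_space - Bad \<subseteq> {h \<in> space hash_space. ddt_terminates h x \<and> inc_path (ddt_root h x) i \<le> 1 + 2 * k}"
    proof clarify
      fix h assume "h \<in> space hash_space" "h \<notin> Bad"
      then have "length (ddt_level h x (1 + 2 * k)) = 1"
        using ddt_level_not_Nil[OF assms, of h "1 + 2 * k"]
        by (auto simp: Bad_def simp flip: length_greater_0_conv)
      then show "ddt_terminates h x \<and> inc_path (ddt_root h x) i \<le> 1 + 2 * k"
        by (rule inc_path_root_le)
    qed
    show "{h \<in> space hash_space. ddt_terminates h x \<and> inc_path (ddt_root h x) i \<le> 1 + 2 * k} \<in> events"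
      using pred_ddt_root by (simp add: pred_def)
  qed
  finally show ?thesis .
qed

lemma log_depth_bounds:
  fixes c :: real and n :: nat
  assumes c: "c > 0" and n: "n \<ge> 2"
  defines "k \<equiv> 3 * nat \<lceil>(c + 1) * log 2 n\<rceil>"
  shows "real (1 + 2 * k) \<le> (13 + 6 * c) * log 2 n" and "real (n - 1) * (3/4) ^ k \<le> n powr (- c)"
proof -
  define m where "m = nat \<lceil>(c + 1) * log 2 n\<rceil>"
  have lg: "log 2 n \<ge> 1" using n by simp
  then have "real m = real_of_int \<lceil>(c + 1) * log 2 n\<rceil>"
    using c unfolding m_def by simp
  then have m: "(c + 1) * log 2 n \<le> real m" "real m \<le> (c + 1) * log 2 n + 1"
    by linarith+
  show "real (1 + 2 * k) \<le> (13 + 6 * c) * log 2 n"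
    using m(2) lg c unfolding k_def m_def[symmetric] by (simp add: algebra_simps)
  have "(3/4::real) ^ k = (27/64) ^ m" by (simp add: k_def m_def power_mult power3_eq_cube)
  also have "\<dots> \<le> (1/2) ^ m" by (intro power_mono) auto
  also have "\<dots> = 1 / 2 powr real m" by (simp add: powr_realpow power_one_over)
  also have "\<dots> \<le> 1 / 2 powr ((c + 1) * log 2 n)"
    using m(1) by (intro divide_left_mono powr_mono) auto
  also have "2 powr ((c + 1) * log 2 n) = (2 powr log 2 n) powr (c + 1)"
    by (simp add: powr_powr mult.commute)
  also have "\<dots> = n powr (c + 1)"
    using n by simp
  finally have "real (n - 1) * (3/4) ^ k \<le> n * (1 / n powr (c + 1))"
    using n by (intro mult_mono) auto
  also have "\<dots> = n powr (- c)"
    using n by (simp add: powr_add powr_minus_divide)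
  finally show "real (n - 1) * (3/4) ^ k \<le> n powr (- c)" .
qed

theorem mainTheorem9:
  fixes c :: real
  assumes "c > 0"
  shows "\<exists>C::real. \<forall>n::nat. n \<ge> 2 \<longrightarrow> (\<forall>x::'a list. length x = n \<longrightarrow>
           (\<forall>i\<in>{1..n}.
              measure (hash_space :: ('a inp \<Rightarrow> real) measure)
                {h \<in> space hash_space. ddt_terminates h x \<and>
                   real (inc_path (ddt_root h x) (i - 1)) \<le> C * log 2 (real n)}
              \<ge> 1 - real n powr (- c)))"
proof (intro exI[of _ "13 + 6 * c"] allI impI ballI)
  fix n :: nat and x :: "'a list" and i
  assume n: "2 \<le> n" and x: "length x = n"
  interpret prob_space "hash_space :: ('a inp \<Rightarrow> real) measure" by (rule prob_space_hash_space)
  define k where "k = 3 * nat \<lceil>(c + 1) * log 2 n\<rceil>"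
  note k = log_depth_bounds[OF assms n, folded k_def]
  have "1 - n powr (- c) \<le> 1 - real (length x - 1) * (3/4) ^ k"
    using k(2) x by simp
  also have "\<dots> \<le> prob {h \<in> space hash_space. ddt_terminates h x \<and> inc_path (ddt_root h x) (i - 1) \<le> 1 + 2 * k}"
    using n x by (intro prob_inc_path_root_le) auto
  also have "\<dots> \<le> prob {h \<in> space hash_space. ddt_terminates h x \<and>
      real (inc_path (ddt_root h x) (i - 1)) \<le> (13 + 6 * c) * log 2 n}"
    using k(1) pred_ddt_root[of x "\<lambda>t. real (inc_path t (i - 1)) \<le> (13 + 6 * c) * log 2 n"]
    by (intro finite_measure_mono) (auto simp: pred_def)
  finally show "1 - n powr (- c) \<le> prob {h \<in> space hash_space. ddt_terminates h x \<and>
      real (inc_path (ddt_root h x) (i - 1)) \<le> (13 + 6 * c) * log 2 n}" .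
qed

end
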